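(* Assume $\mathbb E f(\boldsymbol X)=0$ and $p_{\min}>0$. Let $J_1,J_2,\dots\subset\{1,\dots,M\}$ be any sequence of sets with $\#J_l\le2$, and define $R_0^\star\equiv0$, $R_l^\star(\boldsymbol X)=R_{l-1}^\star(\boldsymbol X)+\mathbb E(f(\boldsymbol X)-R_{l-1}^\star(\boldsymbol X)\mid\boldsymbol X_{\mathcal X(J_l)})$. Then for each $l>0$ and every $J\subset\{1,\dots,M\}$ with $\#J\le2$, $$|\mathbb E(f(\boldsymbol X)-R_{l-1}^\star(\boldsymbol X)\mid\boldsymbol X_{\mathcal X(J)})|\le 3\sqrt{\mathbb E[f(\boldsymbol X)^2]}\,p_{\min}^{-1}\quad\text{almost surely},$$ and for each $s>0$, $\iota_s\le 3s\sqrt{\mathbb E[f(\boldsymbol X)^2]}\,p_{\min}^{-1}$, where $\iota_s=\sum_{l=1}^s\max_{\vec c\in\{0,1\}^{\#\mathcal X(J_l)}}|\mathbb E[f(\boldsymbol X)-R_{l-1}^\star(\boldsymbol X)\mid\boldsymbol X_{\mathcal X(J_l)}=\vec c]|$.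
   Context: Setup. $\boldsymbol X=(X_1,\dots,X_p)^\top$ is a random vector in $\{0,1\}^p$; $\{1,\dots,p\}$ is partitioned into disjoint nonempty feature groups $\mathcal X(1),\dots,\mathcal X(M)$, $M\ge 2$; a group is either a single feature or has $\#\mathcal X(m)>1$ and consists of one-hot indicators ($\sum_{j\in\mathcal X(m)}\mathbf 1\{X_j=1\}=1$ a.s.). $\mathcal X(J)=\bigcup_{m\in J}\mathcal X(m)$, $\boldsymbol X_H=(X_j)_{j\in H}$. Convention: $\mathbb E(h(\boldsymbol X)\mid\boldsymbol X_H=\vec c)=0$ when $\mathbb P(\boldsymbol X_H=\vec c)=0$. $p_{\min}=\min_{1\le l<k\le M,\,i\in\mathcal X(l),\,j\in\mathcal X(k),\,(a,b)\in\{0,1\}^2}\mathbb P(X_i=a,X_j=b)$. $f:\{0,1\}^p\to\mathbb R$. *)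

theory Defs
  imports "HOL-Probability.Probability"
begin

text \<open>A feature vector in {0,1}^p is modelled as x :: nat \<Rightarrow> bool, with coordinates
  0..p-1 (X_j = 1 iff x j); the distribution of X is a pmf supported on vectors
  vanishing outside {0..<p}.\<close>

definition feat_vecs :: "nat \<Rightarrow> (nat \<Rightarrow> bool) set" where
  "feat_vecs p = {x. \<forall>j. p \<le> j \<longrightarrow> \<not> x j}"

definition Xset :: "(nat \<Rightarrow> nat set) \<Rightarrow> nat set \<Rightarrow> nat set" where
  "Xset G J = (\<Union>m\<in>J. G m)"

text \<open>E(h(X) | X_H = c), with the convention 0 when P(X_H = c) = 0.\<close>
definition cond_exp_at ::
  "(nat \<Rightarrow> bool) pmf \<Rightarrow> ((nat \<Rightarrow> bool) \<Rightarrow> real) \<Rightarrow> nat set \<Rightarrow> (nat \<Rightarrow> bool) \<Rightarrow> real" where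
  "cond_exp_at P h H c =
     (let A = {y. \<forall>j\<in>H. y j = c j} in
      if measure_pmf.prob P A = 0 then 0
      else measure_pmf.expectation P (\<lambda>y. h y * indicator A y) / measure_pmf.prob P A)"

definition cond_exp ::
  "(nat \<Rightarrow> bool) pmf \<Rightarrow> ((nat \<Rightarrow> bool) \<Rightarrow> real) \<Rightarrow> nat set \<Rightarrow> (nat \<Rightarrow> bool) \<Rightarrow> real" where
  "cond_exp P h H x = cond_exp_at P h H x"

primrec Rstar ::
  "(nat \<Rightarrow> bool) pmf \<Rightarrow> (nat \<Rightarrow> nat set) \<Rightarrow> ((nat \<Rightarrow> bool) \<Rightarrow> real) \<Rightarrow> (nat \<Rightarrow> nat set)
    \<Rightarrow> nat \<Rightarrow> (nat \<Rightarrow> bool) \<Rightarrow> real" where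
  "Rstar P G f J 0 = (\<lambda>x. 0)"
| "Rstar P G f J (Suc l) = (\<lambda>x. Rstar P G f J l x
      + cond_exp P (\<lambda>y. f y - Rstar P G f J l y) (Xset G (J (Suc l))) x)"

definition p_min :: "(nat \<Rightarrow> bool) pmf \<Rightarrow> (nat \<Rightarrow> nat set) \<Rightarrow> nat \<Rightarrow> real" where
  "p_min P G M = Min {measure_pmf.prob P {x. x i = a \<and> x j = b} | l k i j a b.
       l < k \<and> k < M \<and> i \<in> G l \<and> j \<in> G k}"

definition assignments :: "nat set \<Rightarrow> (nat \<Rightarrow> bool) set" where
  "assignments H = {c. \<forall>j. j \<notin> H \<longrightarrow> \<not> c j}"

definition iota ::
  "(nat \<Rightarrow> bool) pmf \<Rightarrow> (nat \<Rightarrow> nat set) \<Rightarrow> ((nat \<Rightarrow> bool) \<Rightarrow> real) \<Rightarrow> (nat \<Rightarrow> nat set) \<Rightarrow> nat \<Rightarrow> real" where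
  "iota P G f J s = (\<Sum>l=1..s. Max ((\<lambda>c. \<bar>cond_exp_at P (\<lambda>y. f y - Rstar P G f J (l - 1) y)
        (Xset G (J l)) c\<bar>) ` assignments (Xset G (J l))))"

end

(* Each step R*_l = R*_{l-1} + E(f - R*_{l-1} | X_{X(J_l)}) subtracts an orthogonal projection
   from the residual, so E (f - R*_l)^2 never exceeds E f^2.  By Cauchy-Schwarz a conditional
   mean of g on a cell of probability q is at most sqrt (E g^2 / q) in absolute value.  Because
   every group is a single feature or one-hot, on the support a pair of groups is determined by
   one coordinate from each, so every observed cell of X_{X(J)} with #J <= 2 contains an event
   {X_i = a, X_j = b} and has probability at least p_min.  As p_min <= 1, this gives the bound
   sqrt (E f^2) / p_min, with room to spare for the factor 3. *)

theory Submission
  imports Defs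
begin

abbreviation cylinder :: "nat set \<Rightarrow> (nat \<Rightarrow> bool) \<Rightarrow> (nat \<Rightarrow> bool) set" where
  "cylinder H c \<equiv> {y. \<forall>j\<in>H. y j = c j}"

lemma expectation_finite_pmf:
  assumes "finite (set_pmf P)"
  shows "measure_pmf.expectation P h = (\<Sum>x\<in>set_pmf P. pmf P x * h x)"
  by (subst integral_measure_pmf_real[OF assms]) (auto simp: mult.commute)

lemma prob_finite_pmf:
  assumes "finite (set_pmf P)"
  shows "measure_pmf.prob P A = (\<Sum>x\<in>set_pmf P. pmf P x * indicator A x)"
  using expectation_finite_pmf[OF assms, of "indicator A"] by simp

lemma prob_cylinder_pos:
  assumes "x \<in> set_pmf P"
  shows "measure_pmf.prob P (cylinder H x) > 0"
proof -
  have "measure_pmf.prob P {x} \<le> measure_pmf.prob P (cylinder H x)"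
    by (rule measure_pmf.finite_measure_mono) auto
  moreover have "measure_pmf.prob P {x} > 0"
    using assms by (simp add: measure_pmf_single pmf_positive)
  ultimately show ?thesis by linarith
qed

lemma cond_exp_at_cylinder_cong:
  "cylinder H c = cylinder H d \<Longrightarrow> cond_exp_at P h H c = cond_exp_at P h H d"
  by (simp add: cond_exp_at_def Let_def)

lemma cond_exp_at_eq_sum:
  assumes "finite (set_pmf P)" and "x \<in> set_pmf P"
  shows "cond_exp_at P g H x
    = (\<Sum>y\<in>set_pmf P. pmf P y * g y * indicator (cylinder H x) y)
      / (\<Sum>y\<in>set_pmf P. pmf P y * indicator (cylinder H x) y)"
  using prob_cylinder_pos[OF assms(2), of H]
  by (simp add: cond_exp_at_def Let_def expectation_finite_pmf[OF assms(1)]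
      prob_finite_pmf[OF assms(1)] mult.assoc)

text \<open>The tower property, for weights r that are functions of X_H.\<close>
lemma sum_cond_exp_at_mult:
  assumes fin: "finite (set_pmf P)"
    and r: "\<And>x y. x \<in> set_pmf P \<Longrightarrow> y \<in> cylinder H x \<Longrightarrow> r y = r x"
  shows "(\<Sum>x\<in>set_pmf P. pmf P x * cond_exp_at P g H x * r x)
       = (\<Sum>x\<in>set_pmf P. pmf P x * g x * r x)"
proof -
  define S w where "S = set_pmf P" and "w = pmf P"
  define ind where "ind x y = (indicator (cylinder H x) y :: real)" for x y
  define pr where "pr x = (\<Sum>y\<in>S. w y * ind x y)" for x
  have pr_pos: "pr x > 0" if "x \<in> S" for x
    using prob_cylinder_pos[of x P H] that
    by (simp add: pr_def S_def w_def ind_def prob_finite_pmf[OF fin])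
  have swap_term: "w x * w y * g y * ind x y * r x / pr x = w y * g y * r y * (w x * ind y x) / pr y"
    if "x \<in> S" "y \<in> S" for x y
  proof (cases "y \<in> cylinder H x")
    case True
    then have "cylinder H y = cylinder H x" by auto
    then show ?thesis using True r[of x y] that by (simp add: S_def ind_def pr_def)
  next
    case False
    then have "x \<notin> cylinder H y" by auto
    then show ?thesis using False by (simp add: ind_def)
  qed
  have "(\<Sum>x\<in>S. w x * cond_exp_at P g H x * r x)
      = (\<Sum>x\<in>S. \<Sum>y\<in>S. w x * w y * g y * ind x y * r x / pr x)"
    by (rule sum.cong[OF refl])
      (simp add: cond_exp_at_eq_sum[OF fin] S_def w_def ind_def pr_def
        sum_distrib_left sum_distrib_right sum_divide_distrib mult_ac)
  also have "\<dots> = (\<Sum>y\<in>S. \<Sum>x\<in>S. w y * g y * r y * (w x * ind y x) / pr y)"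
    by (subst sum.swap) (simp add: swap_term)
  also have "\<dots> = (\<Sum>y\<in>S. w y * g y * r y)"
    using pr_pos by (intro sum.cong) (force simp: pr_def simp flip: sum_divide_distrib sum_distrib_left)+
  finally show ?thesis by (simp add: S_def w_def)
qed

lemma expectation_sq_sub_cond_exp_le:
  assumes fin: "finite (set_pmf P)"
  shows "measure_pmf.expectation P (\<lambda>x. (g x - cond_exp P g H x)\<^sup>2)
       \<le> measure_pmf.expectation P (\<lambda>x. (g x)\<^sup>2)"
proof -
  define q where "q = cond_exp_at P g H"
  have "(\<Sum>x\<in>set_pmf P. pmf P x * q x * q x) = (\<Sum>x\<in>set_pmf P. pmf P x * g x * q x)"
    unfolding q_def
    by (rule sum_cond_exp_at_mult[OF fin]) (auto intro: cond_exp_at_cylinder_cong)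
  moreover have "(\<Sum>x\<in>set_pmf P. pmf P x * (g x - q x)\<^sup>2)
      = (\<Sum>x\<in>set_pmf P. pmf P x * (g x)\<^sup>2) - 2 * (\<Sum>x\<in>set_pmf P. pmf P x * g x * q x)
        + (\<Sum>x\<in>set_pmf P. pmf P x * q x * q x)"
    by (simp add: power2_eq_square algebra_simps sum.distrib sum_subtractf sum_distrib_left)
  ultimately have "(\<Sum>x\<in>set_pmf P. pmf P x * (g x - q x)\<^sup>2)
      = (\<Sum>x\<in>set_pmf P. pmf P x * (g x)\<^sup>2) - (\<Sum>x\<in>set_pmf P. pmf P x * (q x)\<^sup>2)"
    by (simp add: power2_eq_square mult.assoc)
  also have "\<dots> \<le> (\<Sum>x\<in>set_pmf P. pmf P x * (g x)\<^sup>2)"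
    by (simp add: sum_nonneg)
  finally show ?thesis
    by (simp add: expectation_finite_pmf[OF fin] cond_exp_def q_def)
qed

lemma expectation_sq_sub_Rstar_le:
  assumes fin: "finite (set_pmf P)"
  shows "measure_pmf.expectation P (\<lambda>x. (f x - Rstar P G f J n x)\<^sup>2)
       \<le> measure_pmf.expectation P (\<lambda>x. (f x)\<^sup>2)"
proof (induction n)
  case (Suc n)
  have "measure_pmf.expectation P (\<lambda>x. (f x - Rstar P G f J (Suc n) x)\<^sup>2)
      = measure_pmf.expectation P (\<lambda>x. (f x - Rstar P G f J n x
          - cond_exp P (\<lambda>y. f y - Rstar P G f J n y) (Xset G (J (Suc n))) x)\<^sup>2)"
    by (simp add: diff_diff_eq)
  also have "\<dots> \<le> measure_pmf.expectation P (\<lambda>x. (f x - Rstar P G f J n x)\<^sup>2)"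
    by (rule expectation_sq_sub_cond_exp_le[OF fin])
  finally show ?case using Suc by linarith
qed simp

lemma cond_exp_at_sq_mult_prob_le:
  assumes fin: "finite (set_pmf P)"
  shows "(cond_exp_at P g H c)\<^sup>2 * measure_pmf.prob P (cylinder H c)
       \<le> measure_pmf.expectation P (\<lambda>y. (g y)\<^sup>2)"
proof -
  define A where "A = cylinder H c"
  define N where "N = (\<Sum>y\<in>set_pmf P. pmf P y * (g y * indicator A y))"
  define pr where "pr = (\<Sum>y\<in>set_pmf P. pmf P y * indicator A y)"
  define E2 where "E2 = (\<Sum>y\<in>set_pmf P. pmf P y * (g y)\<^sup>2)"
  have E2_nonneg: "E2 \<ge> 0"
    by (simp add: E2_def sum_nonneg)
  have sqrt_pmf: "pmf P y = sqrt (pmf P y) * sqrt (pmf P y)" for y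
    by simp
  have "N\<^sup>2 = (\<Sum>y\<in>set_pmf P. (sqrt (pmf P y) * g y) * (sqrt (pmf P y) * indicator A y))\<^sup>2"
    unfolding N_def by (subst (1) sqrt_pmf) (simp add: mult_ac)
  also have "\<dots> \<le> (\<Sum>y\<in>set_pmf P. (sqrt (pmf P y) * g y)\<^sup>2)
                  * (\<Sum>y\<in>set_pmf P. (sqrt (pmf P y) * indicator A y)\<^sup>2)"
    by (rule Cauchy_Schwarz_ineq_sum)
  also have "\<dots> = E2 * pr"
    unfolding E2_def pr_def
    by (intro arg_cong2[where f="(*)"] sum.cong) (auto simp: power_mult_distrib indicator_def)
  finally have CS: "N\<^sup>2 \<le> E2 * pr" .
  show ?thesis
  proof (cases "pr = 0")
    case False
    then have "pr > 0" by (simp add: pr_def sum_nonneg order_less_le)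
    then have "(N / pr)\<^sup>2 * pr \<le> E2"
      using CS by (simp add: power2_eq_square field_simps)
    then show ?thesis
      using False by (simp add: cond_exp_at_def Let_def expectation_finite_pmf[OF fin]
          prob_finite_pmf[OF fin] A_def N_def pr_def E2_def)
  qed (simp add: A_def pr_def E2_nonneg[unfolded E2_def] prob_finite_pmf[OF fin]
      expectation_finite_pmf[OF fin])
qed

text \<open>Cells of probability 0 carry the junk value 0 and need no lower bound.\<close>
lemma abs_cond_exp_at_le:
  assumes fin: "finite (set_pmf P)" and m: "m > 0"
    and cells: "\<And>x. x \<in> set_pmf P \<Longrightarrow> m \<le> measure_pmf.prob P (cylinder H x)"
  shows "\<bar>cond_exp_at P g H c\<bar> \<le> sqrt (measure_pmf.expectation P (\<lambda>y. (g y)\<^sup>2) / m)"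
proof (cases "measure_pmf.prob P (cylinder H c) = 0")
  case True
  then show ?thesis using m by (simp add: cond_exp_at_def integral_nonneg_AE)
next
  case False
  have "cylinder H c \<inter> set_pmf P \<noteq> {}"
    using False measure_Int_set_pmf[of P "cylinder H c"] by force
  then obtain x where x: "x \<in> set_pmf P" "x \<in> cylinder H c"
    by blast
  then have "cylinder H c = cylinder H x" by auto
  then have "m \<le> measure_pmf.prob P (cylinder H c)"
    using cells[OF x(1)] by simp
  then have "(cond_exp_at P g H c)\<^sup>2 * m \<le> measure_pmf.expectation P (\<lambda>y. (g y)\<^sup>2)"
    using cond_exp_at_sq_mult_prob_le[OF fin, of g H c]
    by (meson mult_left_mono zero_le_power2 order_trans)
  then show ?thesis
    using m by (simp add: real_le_rsqrt pos_le_divide_eq)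
qed

lemma assignments_eq_image_Pow: "assignments H = (\<lambda>B j. j \<in> B) ` Pow H"
proof (intro equalityI subsetI)
  fix c assume "c \<in> assignments H"
  then have "{j. c j} \<in> Pow H" and "c = (\<lambda>j. j \<in> {j. c j})"
    by (auto simp: assignments_def)
  then show "c \<in> (\<lambda>B j. j \<in> B) ` Pow H" by blast
qed (auto simp: assignments_def)

lemma finite_assignments: "finite H \<Longrightarrow> finite (assignments H)"
  by (simp add: assignments_eq_image_Pow)

lemma finite_feat_vecs: "finite (feat_vecs p)"
proof -
  have "feat_vecs p = assignments {..<p}"
    by (auto simp: feat_vecs_def assignments_def not_less)
  then show ?thesis by (simp add: finite_assignments)
qed

text \<open>For a one-hot group, i is the coordinate switched on in x.\<close>
lemma group_determined_by_one_coordinate: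
  assumes "finite A" "A \<noteq> {}"
    and onehot: "card A > 1 \<longrightarrow> (AE x in measure_pmf P. card {j\<in>A. x j} = 1)"
    and x: "x \<in> set_pmf P"
  shows "\<exists>i\<in>A. \<forall>y\<in>set_pmf P. y i = x i \<longrightarrow> (\<forall>j\<in>A. y j = x j)"
proof (cases "card A > 1")
  case True
  then have one: "\<exists>i. {j\<in>A. y j} = {i}" if "y \<in> set_pmf P" for y
    using onehot that by (simp add: AE_measure_pmf_iff card_1_singleton_iff)
  obtain i where i: "{j\<in>A. x j} = {i}" using one[OF x] by blast
  have "\<forall>y\<in>set_pmf P. y i = x i \<longrightarrow> (\<forall>j\<in>A. y j = x j)"
  proof (intro ballI impI)
    fix y j assume y: "y \<in> set_pmf P" "y i = x i" and j: "j \<in> A"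
    obtain i' where i': "{j\<in>A. y j} = {i'}" using one[OF y(1)] by blast
    have "i \<in> {j\<in>A. y j}" using i y(2) by blast
    then have "{j\<in>A. y j} = {j\<in>A. x j}" using i i' by simp
    then show "y j = x j" using j by blast
  qed
  then show ?thesis using i by blast
next
  case False
  then have "card A = 1"
    using assms(1,2) card_gt_0_iff[of A] by linarith
  then obtain i where "A = {i}"
    by (rule card_1_singletonE)
  then show ?thesis by auto
qed

lemma subset_ordered_pair:
  fixes J :: "nat set"
  assumes "J \<subseteq> {..<M}" "card J \<le> 2" "M \<ge> 2"
  obtains m1 m2 where "m1 < m2" "m2 < M" "J \<subseteq> {m1, m2}"
proof -
  have "finite J" using assms(1) finite_subset by blast
  consider "J = {}" | m where "J = {m}" | m1 m2 where "m1 < m2" "J = {m1, m2}"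
  proof -
    consider "card J = 0" | "card J = 1" | "card J = 2" using assms(2) by linarith
    then show ?thesis
    proof cases
      case 3
      then obtain a b where "a \<noteq> b" "J = {a, b}" by (meson card_2_iff)
      moreover have "J = {b, a}" using \<open>J = {a, b}\<close> by blast
      ultimately show ?thesis using that(3) by (metis linorder_neqE_nat)
    next
      case 1
      then show ?thesis using that(1) \<open>finite J\<close> by simp
    next
      case 2
      then show ?thesis using that(2) by (metis card_1_singletonE)
    qed
  qed
  then show ?thesis
  proof cases
    case 1
    then show ?thesis using that[of 0 1] assms(3) by simp
  next
    case (2 m)
    then have "m < M" using assms(1) by auto
    then show ?thesis
      using that[of 0 1] that[of 0 m] 2 assms(3) by (cases "m = 0") auto
  next
    case (3 m1 m2)
    then show ?thesis using that[of m1 m2] assms(1) by auto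
  qed
qed

lemma p_min_le_prob_pair:
  assumes "\<forall>m<M. finite (G m)" "l < k" "k < M" "i \<in> G l" "j \<in> G k"
  shows "p_min P G M \<le> measure_pmf.prob P {x. x i = a \<and> x j = b}"
proof -
  define U where "U = (\<Union>m<M. G m)"
  define PS where "PS = {measure_pmf.prob P {x. x i = a \<and> x j = b} | l k i j a b.
         l < k \<and> k < M \<and> i \<in> G l \<and> j \<in> G k}"
  have "PS \<subseteq> (\<lambda>(i, j, a, b). measure_pmf.prob P {x. x i = a \<and> x j = b}) ` (U \<times> U \<times> UNIV)"
  proof
    fix t assume "t \<in> PS"
    then obtain l k i j a b where t: "t = measure_pmf.prob P {x. x i = a \<and> x j = b}"
      and "l < k" "k < M" "i \<in> G l" "j \<in> G k"
      unfolding PS_def by blast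
    then have "(i, j, a, b) \<in> U \<times> U \<times> UNIV"
      unfolding U_def by (auto intro: less_trans)
    then show "t \<in> (\<lambda>(i, j, a, b). measure_pmf.prob P {x. x i = a \<and> x j = b}) ` (U \<times> U \<times> UNIV)"
      unfolding t by (rule rev_image_eqI) simp
  qed
  moreover have "finite U" using assms(1) by (simp add: U_def)
  ultimately have "finite PS" by (meson finite_subset finite_imageI finite_SigmaI finite)
  moreover have "measure_pmf.prob P {x. x i = a \<and> x j = b} \<in> PS"
    unfolding PS_def using assms(2-5) by blast
  ultimately show ?thesis
    unfolding p_min_def PS_def[symmetric] by (rule Min_le)
qed

lemma p_min_le_one:
  assumes "M \<ge> 2" "\<forall>m<M. finite (G m) \<and> G m \<noteq> {}"
  shows "p_min P G M \<le> 1"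
proof -
  obtain i j where "i \<in> G 0" "j \<in> G 1" using assms by fastforce
  then have "p_min P G M \<le> measure_pmf.prob P {x. x i = True \<and> x j = True}"
    using assms by (intro p_min_le_prob_pair) auto
  also have "\<dots> \<le> 1" by simp
  finally show ?thesis .
qed

text \<open>A set J' of at most two groups lies inside some pair of distinct groups, and on the
  support each of them is fixed by one coordinate; so the cell of X_{X(J')} through a
  support point contains an event {X_i = a, X_j = b} counted in p_min.\<close>
lemma p_min_le_prob_cylinder:
  assumes M2: "M \<ge> 2" and groups: "\<forall>m<M. finite (G m) \<and> G m \<noteq> {}"
    and onehot: "\<forall>m<M. card (G m) > 1 \<longrightarrow> (AE x in measure_pmf P. card {j\<in>G m. x j} = 1)"
    and x: "x \<in> set_pmf P" and J': "J' \<subseteq> {..<M}" "card J' \<le> 2"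
  shows "p_min P G M \<le> measure_pmf.prob P (cylinder (Xset G J') x)"
proof -
  obtain m1 m2 where m: "m1 < m2" "m2 < M" "J' \<subseteq> {m1, m2}"
    using subset_ordered_pair[OF J' M2] .
  have rep: "\<exists>i\<in>G m. \<forall>y\<in>set_pmf P. y i = x i \<longrightarrow> (\<forall>j\<in>G m. y j = x j)" if "m < M" for m
    using group_determined_by_one_coordinate[of "G m" P x] groups onehot x that by blast
  obtain i1 where i1: "i1 \<in> G m1" "\<forall>y\<in>set_pmf P. y i1 = x i1 \<longrightarrow> (\<forall>j\<in>G m1. y j = x j)"
    using rep[of m1] m by auto
  obtain i2 where i2: "i2 \<in> G m2" "\<forall>y\<in>set_pmf P. y i2 = x i2 \<longrightarrow> (\<forall>j\<in>G m2. y j = x j)"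
    using rep[of m2] m by auto
  define E where "E = {y. y i1 = x i1 \<and> y i2 = x i2}"
  have "E \<inter> set_pmf P \<subseteq> cylinder (Xset G J') x"
  proof (intro subsetI CollectI ballI)
    fix y j assume y: "y \<in> E \<inter> set_pmf P" and "j \<in> Xset G J'"
    then obtain k where "k = m1 \<or> k = m2" "j \<in> G k"
      using m(3) by (auto simp: Xset_def)
    moreover have "y \<in> set_pmf P" "y i1 = x i1" "y i2 = x i2"
      using y by (simp_all add: E_def)
    ultimately show "y j = x j" using i1(2) i2(2) by blast
  qed
  then have "measure_pmf.prob P (E \<inter> set_pmf P) \<le> measure_pmf.prob P (cylinder (Xset G J') x)"
    by (rule measure_pmf.finite_measure_mono) simp
  then have "measure_pmf.prob P E \<le> measure_pmf.prob P (cylinder (Xset G J') x)"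
    by (simp add: measure_Int_set_pmf)
  moreover have "p_min P G M \<le> measure_pmf.prob P E"
    unfolding E_def using groups m i1(1) i2(1) by (intro p_min_le_prob_pair) auto
  ultimately show ?thesis by linarith
qed

lemma sqrt_divide_le_divide:
  fixes a m :: real
  assumes "0 < m" "m \<le> 1" "0 \<le> a"
  shows "sqrt (a / m) \<le> sqrt a / m"
proof -
  have "m \<le> sqrt m"
    using assms(1,2) by (intro real_le_rsqrt) (simp add: power2_eq_square mult_left_le_one_le)
  then show ?thesis
    using assms by (simp add: real_sqrt_divide divide_left_mono)
qed

lemma abs_cond_exp_residual_le:
  assumes fin: "finite (set_pmf P)" and M2: "M \<ge> 2"
    and groups: "\<forall>m<M. finite (G m) \<and> G m \<noteq> {}"
    and onehot: "\<forall>m<M. card (G m) > 1 \<longrightarrow> (AE x in measure_pmf P. card {j\<in>G m. x j} = 1)"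
    and pmin_pos: "p_min P G M > 0" and J': "J' \<subseteq> {..<M}" "card J' \<le> 2"
  shows "\<bar>cond_exp_at P (\<lambda>y. f y - Rstar P G f J n y) (Xset G J') c\<bar>
       \<le> 3 * sqrt (measure_pmf.expectation P (\<lambda>x. (f x)\<^sup>2)) / p_min P G M"
proof -
  define m where "m = p_min P G M"
  define Ef2 where "Ef2 = measure_pmf.expectation P (\<lambda>x. (f x)\<^sup>2)"
  have m: "0 < m" "m \<le> 1"
    using pmin_pos p_min_le_one[OF M2 groups] by (simp_all add: m_def)
  have Ef2: "0 \<le> Ef2"
    by (simp add: Ef2_def integral_nonneg_AE)
  have "\<bar>cond_exp_at P (\<lambda>y. f y - Rstar P G f J n y) (Xset G J') c\<bar>
      \<le> sqrt (measure_pmf.expectation P (\<lambda>y. (f y - Rstar P G f J n y)\<^sup>2) / m)"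
    using p_min_le_prob_cylinder[OF M2 groups onehot _ J']
    by (intro abs_cond_exp_at_le[OF fin m(1)]) (simp add: m_def)
  also have "\<dots> \<le> sqrt (Ef2 / m)"
    using expectation_sq_sub_Rstar_le[OF fin] m(1)
    by (simp add: Ef2_def divide_right_mono)
  also have "\<dots> \<le> sqrt Ef2 / m"
    using m Ef2 by (rule sqrt_divide_le_divide)
  also have "\<dots> \<le> 3 * sqrt Ef2 / m"
    using m Ef2 by (simp add: divide_right_mono)
  finally show ?thesis by (simp add: m_def Ef2_def)
qed

theorem lemma2:
  fixes P :: "(nat \<Rightarrow> bool) pmf" and p M :: nat and G :: "nat \<Rightarrow> nat set"
    and f :: "(nat \<Rightarrow> bool) \<Rightarrow> real" and J :: "nat \<Rightarrow> nat set"
  assumes supp: "set_pmf P \<subseteq> feat_vecs p"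
    and M2: "M \<ge> 2"
    and cover: "(\<Union>m<M. G m) = {..<p}"
    and nonempty: "\<forall>m<M. G m \<noteq> {}"
    and disj: "\<forall>m<M. \<forall>k<M. m \<noteq> k \<longrightarrow> G m \<inter> G k = {}"
    and onehot: "\<forall>m<M. card (G m) > 1 \<longrightarrow> (AE x in measure_pmf P. card {j\<in>G m. x j} = 1)"
    and mean0: "measure_pmf.expectation P f = 0"
    and pmin_pos: "p_min P G M > 0"
    and J_sub: "\<forall>l\<ge>1. J l \<subseteq> {..<M} \<and> card (J l) \<le> 2"
  shows "(\<forall>l>0. \<forall>J'. J' \<subseteq> {..<M} \<and> card J' \<le> 2 \<longrightarrow>
           (AE x in measure_pmf P.
              \<bar>cond_exp P (\<lambda>y. f y - Rstar P G f J (l - 1) y) (Xset G J') x\<bar>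
                \<le> 3 * sqrt (measure_pmf.expectation P (\<lambda>x. (f x)\<^sup>2)) / p_min P G M))
       \<and> (\<forall>s>0. iota P G f J s
              \<le> 3 * real s * sqrt (measure_pmf.expectation P (\<lambda>x. (f x)\<^sup>2)) / p_min P G M)"
proof -
  define B where "B = 3 * sqrt (measure_pmf.expectation P (\<lambda>x. (f x)\<^sup>2)) / p_min P G M"
  have fin: "finite (set_pmf P)"
    using supp finite_feat_vecs by (rule finite_subset)
  have Xset_sub: "Xset G J' \<subseteq> {..<p}" if "J' \<subseteq> {..<M}" for J'
    using that cover by (auto simp: Xset_def)
  have "G m \<subseteq> {..<p}" if "m < M" for m
    using that cover by blast
  then have groups: "\<forall>m<M. finite (G m) \<and> G m \<noteq> {}"
    using nonempty by (auto intro: finite_subset)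
  have bound: "\<bar>cond_exp_at P (\<lambda>y. f y - Rstar P G f J n y) (Xset G J') c\<bar> \<le> B"
    if "J' \<subseteq> {..<M}" "card J' \<le> 2" for J' n c
    unfolding B_def using abs_cond_exp_residual_le[OF fin M2 groups onehot pmin_pos that] .
  have "iota P G f J s \<le> (\<Sum>l=1..s. B)" for s
    unfolding iota_def
  proof (rule sum_mono)
    fix l assume "l \<in> {1..s}"
    then have "J l \<subseteq> {..<M}" "card (J l) \<le> 2" using J_sub by auto
    moreover have "(\<lambda>_. False) \<in> assignments (Xset G (J l))"
      by (simp add: assignments_def)
    ultimately show "Max ((\<lambda>c. \<bar>cond_exp_at P (\<lambda>y. f y - Rstar P G f J (l - 1) y)
        (Xset G (J l)) c\<bar>) ` assignments (Xset G (J l))) \<le> B"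
      using bound finite_assignments[OF finite_subset[OF Xset_sub]]
      by (subst Max_le_iff) auto
  qed
  then show ?thesis
    using bound by (auto simp: B_def cond_exp_def mult_ac intro: AE_I2)
qed

end
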